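(* Let $\lambda>0$, let $d\ge1$ be an integer, and let $(X_t)_{t\ge1}$ be any sequence of vectors in $\mathbb R^p$ with $\|X_t\|_2\le1$. For $t\ge0$ let $V_t=\sum_{s=1}^tX_sX_s^\top+\lambda\mathrm{Id}$ (so $V_0=\lambda\mathrm{Id}$). Then for all $T\ge d+1$, $$\sum_{t=d+1}^T\min\big(1,\|X_t\|_{V_{t-d}^{-1}}^2\big)\le2dp\log\Big(1+\frac{T}{\lambda dp}\Big).$$
   Context: $\|u\|_A=\sqrt{u^\top Au}$ for a positive definite matrix $A$. *)

theory Defs
  imports "HOL-Analysis.Analysis"
begin

definition outer :: "real^'n \<Rightarrow> real^'n^'n" where
  "outer x = (\<chi> i j. x $ i * x $ j)"

definition design :: "real \<Rightarrow> (nat \<Rightarrow> real^'n) \<Rightarrow> nat \<Rightarrow> real^'n^'n" where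
  "design lam X t = (\<Sum>s\<in>{1..t}. outer (X s)) + lam *\<^sub>R mat 1"

definition wnorm :: "real^'n^'n \<Rightarrow> real^'n \<Rightarrow> real" where
  "wnorm A u = sqrt (u \<bullet> (A *v u))"

end

theory Submission
  imports Defs
begin

text \<open>Split \<open>{d+1..T}\<close> into the \<open>d\<close> residue classes modulo \<open>d\<close>. If \<open>s < t\<close> lie in the same
  class then \<open>s \<le> t - d\<close>, so \<open>V\<^bsub>t-d\<^esub>\<close> dominates the regularized Gram matrix of the
  earlier members of the class of \<open>t\<close>; since inversion is antitone, each summand is bounded
  by the corresponding summand of the undelayed problem for that class alone.
  For a single class with \<open>n\<close> members this is the elliptical potential lemma:
  \<open>min 1 u \<le> 2 ln (1 + u)\<close>, the matrix determinant lemma telescopes the product of the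
  \<open>1 + u\<^sub>t\<close> into \<open>det V / \<lambda>\<^sup>p\<close>, and Hadamard's inequality together with AM-GM gives
  \<open>det V \<le> (\<lambda> + n / p)\<^sup>p\<close>. Concavity of \<open>ln\<close> then sums the \<open>d\<close> class bounds.\<close>

subsection \<open>Rank-one matrices and quadratic forms\<close>

definition rank_one :: "real^'n \<Rightarrow> real^'m \<Rightarrow> real^'m^'n" where
  "rank_one u v = (\<chi> i j. u $ i * v $ j)"

definition psd :: "real^'n^'n \<Rightarrow> bool" where
  "psd A \<longleftrightarrow> transpose A = A \<and> (\<forall>x. 0 \<le> x \<bullet> (A *v x))"

lemma outer_eq_rank_one: "outer x = rank_one x x"
  by (simp add: outer_def rank_one_def)

lemma rank_one_mulv: "rank_one u v *v x = (v \<bullet> x) *\<^sub>R u"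
  by (simp add: rank_one_def vec_eq_iff matrix_vector_mult_def inner_vec_def sum_distrib_left mult_ac)

lemma transpose_rank_one: "transpose (rank_one u v) = rank_one v u"
  by (simp add: rank_one_def transpose_def vec_eq_iff mult.commute)

lemma matrix_mul_rank_one: "M ** rank_one u v = rank_one (M *v u) v"
  by (simp add: rank_one_def vec_eq_iff matrix_matrix_mult_def matrix_vector_mult_def
      sum_distrib_left mult_ac)

lemma rank_one_matrix_mul: "rank_one u v ** M = rank_one u (v v* M)"
  by (simp add: rank_one_def vec_eq_iff matrix_matrix_mult_def vector_matrix_mult_def
      sum_distrib_left mult_ac)

lemma matrix_add_rdistrib: "((A::real^'n^'m) + B) ** C = A ** C + B ** C"
  by (vector matrix_matrix_mult_def sum.distrib[symmetric] field_simps)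

lemma matrix_vector_mult_axis: "M *v axis i 1 = column i M"
  by (simp add: vec_eq_iff matrix_vector_mult_def column_def axis_def
      if_distrib[where f="\<lambda>t. _ * t"] cong: if_cong)

lemma axis_vector_matrix_mult: "axis i 1 v* M = row i M"
  by (simp add: vec_eq_iff vector_matrix_mult_def row_def axis_def
      if_distrib[where f="\<lambda>t. t * _"] cong: if_cong)

lemma transpose_diff: "transpose (A - B) = transpose A - transpose B"
  by (simp add: transpose_def vec_eq_iff)

lemma symmetric_inner_mulv:
  fixes A :: "real^'n^'n"
  assumes "transpose A = A"
  shows "x \<bullet> (A *v y) = y \<bullet> (A *v x)"
proof -
  have "x \<bullet> (A *v y) = (x v* transpose A) \<bullet> y"
    by (simp add: dot_lmul_matrix assms)
  then show ?thesis by (simp add: inner_commute)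
qed

lemma quadratic_form_add:
  fixes A :: "real^'n^'n"
  assumes "transpose A = A"
  shows "(x + y) \<bullet> (A *v (x + y)) = x \<bullet> (A *v x) + 2 * (x \<bullet> (A *v y)) + y \<bullet> (A *v y)"
  using symmetric_inner_mulv[OF assms, of y x]
  by (simp add: matrix_vector_right_distrib inner_add_left inner_add_right)

lemma matrix_mul_matrix_inv:
  fixes A :: "real^'n^'n"
  assumes "invertible A"
  shows "A ** matrix_inv A = mat 1"
  using someI_ex[OF assms[unfolded invertible_def]] by (simp add: matrix_inv_def)

lemma mulv_matrix_inv_mulv:
  fixes A :: "real^'n^'n"
  assumes "invertible A"
  shows "A *v (matrix_inv A *v x) = x"
  by (simp add: matrix_vector_mul_assoc matrix_mul_matrix_inv assms)

lemma invertible_if_pos_def: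
  fixes A :: "real^'n^'n"
  assumes "\<And>x. x \<noteq> 0 \<Longrightarrow> 0 < x \<bullet> (A *v x)"
  shows "invertible A"
proof -
  have "\<forall>x. A *v x = 0 \<longrightarrow> x = 0" using assms by force
  then show ?thesis by (simp add: invertible_left_inverse matrix_left_invertible_ker)
qed

lemma matrix_inv_quadratic_nonneg:
  fixes A :: "real^'n^'n"
  assumes "invertible A" and "\<And>x. 0 \<le> x \<bullet> (A *v x)"
  shows "0 \<le> x \<bullet> (matrix_inv A *v x)"
proof -
  define z where "z = matrix_inv A *v x"
  have "x \<bullet> (matrix_inv A *v x) = (A *v z) \<bullet> z"
    unfolding z_def by (simp add: mulv_matrix_inv_mulv assms(1))
  with assms(2)[of z] show ?thesis by (simp add: inner_commute)
qed

lemma matrix_inv_quadratic_antimono: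
  fixes A B :: "real^'n^'n"
  assumes "invertible A" "invertible B" "psd B"
    and "\<And>x. x \<bullet> (B *v x) \<le> x \<bullet> (A *v x)"
  shows "x \<bullet> (matrix_inv A *v x) \<le> x \<bullet> (matrix_inv B *v x)"
proof -
  define y where "y = matrix_inv A *v x"
  define z where "z = matrix_inv B *v x"
  have Ay: "A *v y = x" and Bz: "B *v z = x"
    by (simp_all add: y_def z_def mulv_matrix_inv_mulv assms(1,2))
  have "0 \<le> (y - z) \<bullet> (B *v (y - z))"
    using assms(3) by (simp add: psd_def)
  also have "\<dots> = y \<bullet> (B *v y) - 2 * (y \<bullet> x) + z \<bullet> x"
    using assms(3) Bz symmetric_inner_mulv[of B y z]
    by (simp add: psd_def matrix_vector_mult_diff_distrib inner_diff_left inner_diff_right inner_commute)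
  also have "y \<bullet> (B *v y) \<le> y \<bullet> x"
    using assms(4)[of y] Ay by simp
  finally show ?thesis by (simp add: y_def z_def inner_commute)
qed

subsection \<open>Determinants\<close>

lemma det_mat: "det (mat c :: 'a::comm_ring_1^'n^'n) = c ^ CARD('n)"
  by (simp add: det_diagonal mat_def)

lemma det_identity_row_replace:
  fixes y :: "'a::field^'n"
  shows "det (\<chi> r. if r = k then y else axis r 1) = y $ k"
proof -
  define D :: "'a^'n^'n" where "D = (\<chi> r. if r = k then y $ k *s axis k 1 else axis r 1)"
  have row_D: "row r D = (if r = k then y $ k *s axis k 1 else axis r 1)" for r
    by (simp add: D_def row_def)
  have "y - y $ k *s axis k 1 = (\<Sum>r\<in>UNIV - {k}. y $ r *s axis r 1)"
    using sum.remove[of UNIV k "\<lambda>r. y $ r *s axis r 1"]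
    by (simp add: basis_expansion) (metis add_diff_cancel_left')
  also have "\<dots> \<in> vec.span {row r D | r. r \<noteq> k}"
    by (intro vec.span_sum vec.span_scale vec.span_base) (auto simp: row_D)
  finally have "det (\<chi> r. if r = k then row k D + (y - y $ k *s axis k 1) else row r D) = det D"
    by (rule det_row_span)
  moreover have "det D = y $ k"
  proof -
    have "det D = (\<Prod>r\<in>UNIV. D $ r $ r)"
      by (rule det_diagonal) (auto simp: D_def axis_def)
    also have "\<dots> = (\<Prod>r\<in>UNIV. if r = k then y $ k else 1)"
      by (intro prod.cong) (simp_all add: D_def axis_def)
    finally show ?thesis by simp
  qed
  ultimately show ?thesis
    by (simp add: row_D cong: if_cong)
qed

lemma det_identity_add_rank_one:
  fixes u v :: "real^'n"
  shows "det (mat 1 + rank_one u v) = 1 + u \<bullet> v"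
proof (cases "u = 0")
  case True
  then have "rank_one u v = 0" by (simp add: rank_one_def vec_eq_iff)
  with True show ?thesis by simp
next
  case False
  then obtain k where "u $ k \<noteq> 0" by (auto simp: vec_eq_iff)
  \<comment> \<open>Conjugating by \<open>P\<close>, the identity with column \<open>k\<close> replaced by \<open>u\<close>, moves \<open>u\<close> to \<open>axis k 1\<close>.\<close>
  define P :: "real^'n^'n" where "P = transpose (\<chi> r. if r = k then u else axis r 1)"
  define w where "w = v v* P"
  have det_P: "det P = u $ k"
    by (simp add: P_def det_identity_row_replace)
  have P_axis: "P *v axis k 1 = u"
    by (simp add: P_def matrix_vector_mult_axis row_def)
  have conj: "(mat 1 + rank_one u v) ** P = P ** (mat 1 + rank_one (axis k 1) w)"
    by (simp add: matrix_add_ldistrib matrix_add_rdistrib matrix_mul_rank_one rank_one_matrix_mul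
        P_axis w_def)
  have "mat 1 + rank_one (axis k 1) w = (\<chi> r. if r = k then axis k 1 + w else axis r 1)"
    by (simp add: vec_eq_iff rank_one_def mat_def axis_def)
  then have "det (mat 1 + rank_one (axis k 1) w) = 1 + w $ k"
    by (simp add: det_identity_row_replace)
  then have "det (mat 1 + rank_one u v) * det P = det P * (1 + w $ k)"
    using arg_cong[OF conj, of det] by (simp add: det_mul)
  moreover have "w $ k = u \<bullet> v"
    by (simp add: w_def P_def vector_matrix_mult_def transpose_def inner_vec_def mult.commute)
  ultimately show ?thesis
    using det_P \<open>u $ k \<noteq> 0\<close> by simp
qed

lemma det_add_outer:
  fixes W :: "real^'n^'n"
  assumes "invertible W"
  shows "det (W + outer x) = det W * (1 + x \<bullet> (matrix_inv W *v x))"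
proof -
  have "W + outer x = W ** (mat 1 + rank_one (matrix_inv W *v x) x)"
    by (simp add: matrix_add_ldistrib matrix_mul_rank_one mulv_matrix_inv_mulv assms outer_eq_rank_one)
  then show ?thesis
    by (simp add: det_mul det_identity_add_rank_one inner_commute)
qed

subsection \<open>Hadamard's inequality\<close>

text \<open>The principal submatrix on \<open>K\<close> is padded with the identity so that it keeps the type
  of \<open>A\<close>; this makes an induction over \<open>K\<close> possible.\<close>

definition principal_submatrix :: "'n set \<Rightarrow> real^'n^'n \<Rightarrow> real^'n^'n" where
  "principal_submatrix K A = (\<chi> i j. if i \<in> K \<and> j \<in> K then A $ i $ j else if i = j then 1 else 0)"

definition schur_complement :: "'n \<Rightarrow> real^'n^'n \<Rightarrow> real^'n^'n" where
  "schur_complement i A = A - (1 / A $ i $ i) *\<^sub>R rank_one (column i A) (column i A)"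

lemma psd_diag_nonneg:
  assumes "psd A"
  shows "0 \<le> A $ k $ k"
proof -
  have "A $ k $ k = axis k 1 \<bullet> (A *v axis k 1)"
    by (simp add: matrix_vector_mult_axis inner_axis' column_def)
  with assms show ?thesis by (metis psd_def)
qed

lemma quadratic_form_add_axis:
  fixes A :: "real^'n^'n"
  assumes "transpose A = A"
  shows "(x + t *\<^sub>R axis i 1) \<bullet> (A *v (x + t *\<^sub>R axis i 1))
    = x \<bullet> (A *v x) + 2 * t * (x \<bullet> column i A) + t\<^sup>2 * A $ i $ i"
  using assms by (simp add: quadratic_form_add matrix_vector_mult_scaleR matrix_vector_mult_axis
      inner_axis' column_def power2_eq_square)

lemma psd_zero_diag_column:
  assumes "psd A" and "A $ i $ i = 0"
  shows "column i A = 0"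
proof (rule ccontr)
  define c where "c = column i A"
  assume "column i A \<noteq> 0"
  then have "0 < c \<bullet> c" by (simp add: c_def)
  define t where "t = - (c \<bullet> (A *v c) + 1) / (2 * (c \<bullet> c))"
  have "(c + t *\<^sub>R axis i 1) \<bullet> (A *v (c + t *\<^sub>R axis i 1)) = c \<bullet> (A *v c) + 2 * t * (c \<bullet> c)"
    using assms by (simp add: psd_def quadratic_form_add_axis c_def)
  also have "\<dots> = -1"
    using \<open>0 < c \<bullet> c\<close> by (simp add: t_def field_simps)
  finally show False
    using assms(1) by (metis psd_def neg_0_le_iff_le not_one_le_zero)
qed

lemma schur_complement_quadratic:
  "x \<bullet> (schur_complement i A *v x) = x \<bullet> (A *v x) - (column i A \<bullet> x)\<^sup>2 / A $ i $ i"
  by (simp add: schur_complement_def matrix_vector_mult_diff_rdistrib rank_one_mulv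
      scaleR_matrix_vector_assoc[symmetric] inner_diff_right power2_eq_square inner_commute)

lemma psd_schur_complement:
  assumes "psd A" and "0 < A $ i $ i"
  shows "psd (schur_complement i A)"
  unfolding psd_def
proof safe
  show "transpose (schur_complement i A) = schur_complement i A"
    using assms(1) by (simp add: psd_def schur_complement_def transpose_diff transpose_scalar
        transpose_rank_one)
next
  fix x
  define c where "c = column i A"
  define t where "t = - (c \<bullet> x) / A $ i $ i"
  have "0 \<le> (x + t *\<^sub>R axis i 1) \<bullet> (A *v (x + t *\<^sub>R axis i 1))"
    using assms(1) by (simp add: psd_def)
  also have "\<dots> = x \<bullet> (A *v x) + 2 * t * (x \<bullet> c) + t\<^sup>2 * A $ i $ i"
    using assms(1) by (simp add: psd_def quadratic_form_add_axis c_def)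
  also have "\<dots> = x \<bullet> (schur_complement i A *v x)"
  proof -
    have "2 * t * (x \<bullet> c) + t\<^sup>2 * A $ i $ i = - (c \<bullet> x)\<^sup>2 / A $ i $ i"
      using assms(2) by (simp add: t_def inner_commute power2_eq_square field_simps)
    then show ?thesis by (simp add: schur_complement_quadratic c_def)
  qed
  finally show "0 \<le> x \<bullet> (schur_complement i A *v x)" .
qed

lemma schur_complement_diag_le:
  assumes "0 < A $ i $ i"
  shows "schur_complement i A $ k $ k \<le> A $ k $ k"
  using assms by (simp add: schur_complement_def rank_one_def)

lemma elementary_congruence_nth:
  fixes N :: "real^'n^'n" and v :: "real^'n" and i :: 'n
  defines "L \<equiv> mat 1 + rank_one v (axis i 1)"
  shows "(L ** N ** transpose L) $ r $ s
    = N $ r $ s + v $ r * N $ i $ s + N $ r $ i * v $ s + v $ r * N $ i $ i * v $ s"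
proof -
  have "transpose L = mat 1 + rank_one (axis i 1) v"
    by (simp add: L_def vec_eq_iff transpose_def rank_one_def mat_def mult.commute)
  then show ?thesis
    by (simp add: L_def matrix_add_ldistrib matrix_add_rdistrib matrix_mul_rank_one
        rank_one_matrix_mul axis_vector_matrix_mult matrix_vector_mult_axis)
      (simp add: rank_one_def row_def column_def algebra_simps)
qed

lemma det_principal_submatrix_insert:
  fixes A :: "real^'n^'n"
  assumes "transpose A = A" and "i \<notin> K" and "A $ i $ i \<noteq> 0"
  shows "det (principal_submatrix (insert i K) A)
    = A $ i $ i * det (principal_submatrix K (schur_complement i A))"
proof -
  define a where "a = A $ i $ i"
  define M where "M = principal_submatrix K (schur_complement i A)"
  define v :: "real^'n" where "v = (\<chi> r. if r \<in> K then A $ r $ i / a else 0)"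
  define L where "L = mat 1 + rank_one v (axis i 1)"
  define N where "N = (\<chi> r. if r = i then a *s row r M else row r M)"
  have sym: "A $ i $ s = A $ s $ i" for s
    using assms(1) by (metis transpose_def vec_lambda_beta)
  have N_nth: "N $ r $ s = (if r = i then if s = i then a else 0 else M $ r $ s)" for r s
    using assms(2) by (simp add: N_def M_def row_def principal_submatrix_def)
  have "principal_submatrix (insert i K) A $ r $ s = (L ** N ** transpose L) $ r $ s" for r s
    unfolding L_def elementary_congruence_nth N_nth
    using assms(2,3) sym[of s]
    by (auto simp: M_def v_def a_def principal_submatrix_def schur_complement_def rank_one_def
        column_def field_simps)
  then have "principal_submatrix (insert i K) A = L ** N ** transpose L"
    by (simp add: vec_eq_iff)
  moreover have "det L = 1"
    using assms(2) by (simp add: L_def det_identity_add_rank_one inner_axis v_def)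
  moreover have "det N = a * det M"
    using det_row_mul[of i a "\<lambda>r. row r M" "\<lambda>r. row r M"] by (simp add: N_def row_def)
  ultimately show ?thesis
    by (simp add: det_mul a_def M_def)
qed

lemma det_principal_submatrix_le_prod_diag:
  assumes "psd A"
  shows "det (principal_submatrix K A) \<le> (\<Prod>k\<in>K. A $ k $ k)"
  using finite[of K] assms
proof (induction K arbitrary: A rule: finite_induct)
  case empty
  have "principal_submatrix {} A = mat 1"
    by (simp add: principal_submatrix_def mat_def vec_eq_iff)
  then show ?case by simp
next
  case (insert i K)
  have diag_nonneg: "0 \<le> A $ k $ k" for k
    using insert.prems by (rule psd_diag_nonneg)
  show ?case
  proof (cases "A $ i $ i = 0")
    case True
    with insert.prems have "column i A = 0"
      by (rule psd_zero_diag_column)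
    then have "column i (principal_submatrix (insert i K) A) = 0"
      by (simp add: principal_submatrix_def column_def vec_eq_iff)
    then show ?thesis
      by (simp add: det_zero_column prod_nonneg diag_nonneg)
  next
    case False
    then have a_pos: "0 < A $ i $ i"
      using diag_nonneg[of i] by simp
    have "det (principal_submatrix (insert i K) A)
        = A $ i $ i * det (principal_submatrix K (schur_complement i A))"
      using insert.prems insert.hyps(2) False by (simp add: psd_def det_principal_submatrix_insert)
    also have "\<dots> \<le> A $ i $ i * (\<Prod>k\<in>K. schur_complement i A $ k $ k)"
      using insert.IH[OF psd_schur_complement[OF insert.prems a_pos]] a_pos by simp
    also have "\<dots> \<le> A $ i $ i * (\<Prod>k\<in>K. A $ k $ k)"
      using a_pos psd_diag_nonneg[OF psd_schur_complement[OF insert.prems a_pos]]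
      by (simp add: prod_mono schur_complement_diag_le)
    also have "\<dots> = (\<Prod>k\<in>insert i K. A $ k $ k)"
      using insert.hyps by simp
    finally show ?thesis .
  qed
qed

theorem det_le_prod_diag:
  assumes "psd A"
  shows "det A \<le> (\<Prod>k\<in>UNIV. A $ k $ k)"
proof -
  have "principal_submatrix UNIV A = A"
    by (simp add: principal_submatrix_def vec_eq_iff)
  with det_principal_submatrix_le_prod_diag[OF assms, of UNIV] show ?thesis by simp
qed

lemma sum_ln_le_card_mult_ln_mean:
  fixes f :: "'a \<Rightarrow> real"
  assumes "finite I" and "I \<noteq> {}" and "\<And>i. i \<in> I \<Longrightarrow> 0 < f i"
  shows "(\<Sum>i\<in>I. ln (f i)) \<le> real (card I) * ln ((\<Sum>i\<in>I. f i) / real (card I))"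
proof -
  have card_pos: "0 < card I"
    using assms(1,2) by (simp add: card_gt_0_iff)
  have "(\<Sum>i\<in>I. (1 / card I) * ln (f i)) \<le> ln (\<Sum>i\<in>I. (1 / card I) *\<^sub>R f i)"
    using assms by (intro concave_on_sum[OF _ _ ln_concave]) auto
  then show ?thesis
    using card_pos by (simp add: sum_distrib_left[symmetric] sum_divide_distrib[symmetric] field_simps)
qed

corollary ln_det_le_ln_trace:
  fixes A :: "real^'n^'n"
  assumes "psd A" and "0 < det A"
  shows "ln (det A) \<le> real CARD('n) * ln (trace A / real CARD('n))"
proof -
  have "0 < (\<Prod>k\<in>UNIV. A $ k $ k)"
    using det_le_prod_diag[OF assms(1)] assms(2) by linarith
  then have diag_pos: "0 < A $ k $ k" for k
    using psd_diag_nonneg[OF assms(1), of k] by (metis UNIV_I finite prod_zero_iff order_less_le)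
  have "ln (det A) \<le> ln (\<Prod>k\<in>UNIV. A $ k $ k)"
    using det_le_prod_diag[OF assms(1)] assms(2) by simp
  also have "\<dots> = (\<Sum>k\<in>UNIV. ln (A $ k $ k))"
    using diag_pos by (simp add: ln_prod order_less_imp_not_eq2)
  also have "\<dots> \<le> real CARD('n) * ln (trace A / real CARD('n))"
    using sum_ln_le_card_mult_ln_mean[of "UNIV :: 'n set" "\<lambda>k. A $ k $ k"] diag_pos by (simp add: trace_def)
  finally show ?thesis .
qed

subsection \<open>Regularized Gram matrices\<close>

definition gram :: "real \<Rightarrow> ('a \<Rightarrow> real^'n) \<Rightarrow> 'a set \<Rightarrow> real^'n^'n" where
  "gram lam y S = (\<Sum>s\<in>S. outer (y s)) + lam *\<^sub>R mat 1"

lemma design_eq_gram: "design lam X t = gram lam X {1..t}"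
  by (simp add: design_def gram_def)

lemma gram_nth: "gram lam y S $ i $ j = (\<Sum>s\<in>S. y s $ i * y s $ j) + (if i = j then lam else 0)"
  by (simp add: gram_def outer_def sum_component mat_def)

lemma gram_quadratic: "x \<bullet> (gram lam y S *v x) = (\<Sum>s\<in>S. (y s \<bullet> x)\<^sup>2) + lam * (x \<bullet> x)"
proof -
  have "(\<Sum>s\<in>S. outer (y s)) *v x = (\<Sum>s\<in>S. (y s \<bullet> x) *\<^sub>R y s)"
    by (induction S rule: infinite_finite_induct)
      (simp_all add: matrix_vector_mult_add_rdistrib outer_eq_rank_one rank_one_mulv)
  then show ?thesis
    by (simp add: gram_def matrix_vector_mult_add_rdistrib scaleR_matrix_vector_assoc[symmetric]
        inner_sum_right inner_add_right power2_eq_square inner_commute)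
qed

lemma psd_gram: "0 \<le> lam \<Longrightarrow> psd (gram lam y S)"
  by (simp add: psd_def gram_quadratic sum_nonneg vec_eq_iff transpose_def gram_nth mult.commute)

lemma invertible_gram: "0 < lam \<Longrightarrow> invertible (gram lam y S)"
  by (rule invertible_if_pos_def) (simp add: gram_quadratic add_nonneg_pos sum_nonneg)

lemma gram_inv_quadratic_nonneg: "0 < lam \<Longrightarrow> 0 \<le> x \<bullet> (matrix_inv (gram lam y S) *v x)"
  using psd_gram[of lam y S] by (simp add: matrix_inv_quadratic_nonneg invertible_gram psd_def)

lemma gram_inv_quadratic_antimono:
  assumes "0 < lam" and "finite S'" and "S \<subseteq> S'"
  shows "x \<bullet> (matrix_inv (gram lam y S') *v x) \<le> x \<bullet> (matrix_inv (gram lam y S) *v x)"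
proof (rule matrix_inv_quadratic_antimono)
  show "z \<bullet> (gram lam y S *v z) \<le> z \<bullet> (gram lam y S' *v z)" for z
    using assms(2,3) by (simp add: gram_quadratic sum_mono2)
qed (use assms(1) in \<open>simp_all add: invertible_gram psd_gram\<close>)

lemma wnorm_matrix_inv_gram:
  "0 < lam \<Longrightarrow> (wnorm (matrix_inv (gram lam y S)) x)\<^sup>2 = x \<bullet> (matrix_inv (gram lam y S) *v x)"
  by (simp add: wnorm_def gram_inv_quadratic_nonneg)

lemma trace_gram: "trace (gram lam y S) = (\<Sum>s\<in>S. (norm (y s))\<^sup>2) + real CARD('n) * lam"
  for lam :: real and y :: "'a \<Rightarrow> real^'n"
  by (simp add: trace_def gram_nth sum.distrib sum.swap[of _ S] power2_norm_eq_inner inner_vec_def)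

lemma det_gram:
  fixes y :: "'a::linorder \<Rightarrow> real^'n"
  assumes "0 < lam" and "finite S"
  shows "det (gram lam y S)
    = lam ^ CARD('n) * (\<Prod>t\<in>S. 1 + y t \<bullet> (matrix_inv (gram lam y {s\<in>S. s < t}) *v y t))"
  using assms(2)
proof (induction S rule: finite_linorder_max_induct)
  case empty
  have "gram lam y {} = mat lam"
    by (simp add: gram_def vec_eq_iff mat_def)
  then show ?case by (simp add: det_mat)
next
  case (insert b S)
  have "b \<notin> S" and "{s \<in> insert b S. s < b} = S"
    using insert.hyps by auto
  moreover have "{s \<in> insert b S. s < t} = {s \<in> S. s < t}" if "t \<in> S" for t
    using insert.hyps that by auto
  moreover have "gram lam y (insert b S) = gram lam y S + outer (y b)"
    using insert.hyps \<open>b \<notin> S\<close> by (simp add: gram_def algebra_simps)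
  ultimately show ?case
    using insert.IH insert.hyps(1) assms(1)
    by (simp add: det_add_outer invertible_gram mult_ac cong: prod.cong)
qed

subsection \<open>The elliptical potential lemma\<close>

lemma min_one_le_two_ln:
  fixes u :: real
  assumes "0 \<le> u"
  shows "min 1 u \<le> 2 * ln (1 + u)"
proof -
  have "u / (1 + u) \<le> ln (1 + u)"
    using ln_le_minus_one[of "1 / (1 + u)"] assms by (simp add: ln_div field_simps)
  moreover have "min 1 u \<le> 2 * (u / (1 + u))"
    using assms mult_left_le_one_le[of u u] by (auto simp: min_def field_simps)
  ultimately show ?thesis by linarith
qed

theorem elliptical_potential:
  fixes y :: "'a::linorder \<Rightarrow> real^'n" and lam :: real
  assumes "0 < lam" and "finite S" and "\<And>s. s \<in> S \<Longrightarrow> norm (y s) \<le> 1"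
  shows "(\<Sum>t\<in>S. min 1 (y t \<bullet> (matrix_inv (gram lam y {s\<in>S. s < t}) *v y t)))
    \<le> 2 * real CARD('n) * ln (1 + real (card S) / (lam * real CARD('n)))"
proof -
  define u where "u t = y t \<bullet> (matrix_inv (gram lam y {s\<in>S. s < t}) *v y t)" for t
  define n where "n = real CARD('n)"
  have u_nonneg: "0 \<le> u t" for t
    unfolding u_def using assms(1) by (rule gram_inv_quadratic_nonneg)
  have det_eq: "det (gram lam y S) = lam ^ CARD('n) * (\<Prod>t\<in>S. 1 + u t)"
    unfolding u_def using assms(1,2) by (rule det_gram)
  have prod_pos: "0 < (\<Prod>t\<in>S. 1 + u t)"
    using u_nonneg by (simp add: prod_pos add_pos_nonneg)
  have "1 + u t \<noteq> 0" for t
    using u_nonneg[of t] by linarith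
  then have ln_prod_eq: "ln (\<Prod>t\<in>S. 1 + u t) = (\<Sum>t\<in>S. ln (1 + u t))"
    by (simp add: ln_prod assms(2))
  have "(\<Sum>t\<in>S. min 1 (u t)) \<le> (\<Sum>t\<in>S. 2 * ln (1 + u t))"
    by (intro sum_mono min_one_le_two_ln u_nonneg)
  also have "\<dots> = 2 * (ln (det (gram lam y S)) - n * ln lam)"
    using prod_pos assms(1)
    by (simp add: det_eq ln_mult ln_realpow n_def ln_prod_eq sum_distrib_left)
  also have "\<dots> \<le> 2 * (n * ln (trace (gram lam y S) / n) - n * ln lam)"
  proof -
    have "0 < det (gram lam y S)"
      using prod_pos assms(1) by (simp add: det_eq)
    with assms(1) show ?thesis
      using ln_det_le_ln_trace[OF psd_gram[of lam y S]] by (simp add: n_def)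
  qed
  also have "\<dots> \<le> 2 * n * ln (1 + card S / (lam * n))"
  proof -
    define m where "m = trace (gram lam y S) / n"
    have "(\<Sum>s\<in>S. (norm (y s))\<^sup>2) \<le> card S"
      using sum_mono[of S "\<lambda>s. (norm (y s))\<^sup>2" "\<lambda>_. 1"] assms(3) by (simp add: power_le_one)
    then have "m / lam \<le> 1 + card S / (lam * n)"
      using assms(1) by (simp add: m_def trace_gram n_def field_simps)
    moreover have "0 < m"
      using assms(1) by (simp add: m_def n_def trace_gram add_nonneg_pos sum_nonneg)
    ultimately have "ln (m / lam) \<le> ln (1 + card S / (lam * n))"
      using assms(1) by (simp add: ln_mono)
    with \<open>0 < m\<close> have "ln m - ln lam \<le> ln (1 + card S / (lam * n))"
      using assms(1) by (simp add: ln_div)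
    from mult_left_mono[OF this, of "2 * n"] show ?thesis
      by (simp add: m_def n_def algebra_simps)
  qed
  finally show ?thesis by (simp add: u_def n_def mult_ac)
qed

lemma sum_ln_one_plus_le_card_mult_ln:
  fixes c :: "'a \<Rightarrow> real" and k :: real
  assumes "finite I" and "I \<noteq> {}" and "0 < k" and "\<And>i. i \<in> I \<Longrightarrow> 0 \<le> c i"
  shows "(\<Sum>i\<in>I. ln (1 + c i / k))
    \<le> real (card I) * ln (1 + (\<Sum>i\<in>I. c i) / (k * real (card I)))"
proof -
  have card_pos: "0 < card I"
    using assms(1,2) by (simp add: card_gt_0_iff)
  have "(\<Sum>i\<in>I. ln (1 + c i / k)) \<le> real (card I) * ln ((\<Sum>i\<in>I. 1 + c i / k) / real (card I))"
    using assms by (intro sum_ln_le_card_mult_ln_mean) (auto simp: add_pos_nonneg)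
  also have "(\<Sum>i\<in>I. 1 + c i / k) / real (card I) = 1 + (\<Sum>i\<in>I. c i) / (k * real (card I))"
    using card_pos assms(3) by (simp add: sum.distrib sum_divide_distrib[symmetric] field_simps)
  finally show ?thesis .
qed

theorem elliptical_potential_partition:
  fixes y :: "'a::linorder \<Rightarrow> real^'n" and f :: "'a \<Rightarrow> 'b" and lam :: real
  assumes "0 < lam" and "finite S" and "\<And>s. s \<in> S \<Longrightarrow> norm (y s) \<le> 1"
    and "finite R" and "R \<noteq> {}" and "f ` S \<subseteq> R"
  shows "(\<Sum>t\<in>S. min 1 (y t \<bullet> (matrix_inv (gram lam y {s\<in>S. f s = f t \<and> s < t}) *v y t)))
    \<le> 2 * real (card R) * real CARD('n)
        * ln (1 + real (card S) / (lam * real (card R) * real CARD('n)))"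
proof -
  define n where "n = real CARD('n)"
  define C where "C r = {t\<in>S. f t = r}" for r
  have "(\<Sum>t\<in>S. min 1 (y t \<bullet> (matrix_inv (gram lam y {s\<in>S. f s = f t \<and> s < t}) *v y t)))
      = (\<Sum>r\<in>R. \<Sum>t\<in>C r. min 1 (y t \<bullet> (matrix_inv (gram lam y {s\<in>S. f s = f t \<and> s < t}) *v y t)))"
    unfolding C_def using assms(2,4,6) by (rule sum.group[symmetric])
  also have "\<dots> = (\<Sum>r\<in>R. \<Sum>t\<in>C r. min 1 (y t \<bullet> (matrix_inv (gram lam y {s\<in>C r. s < t}) *v y t)))"
    by (intro sum.cong refl) (auto simp: C_def)
  also have "\<dots> \<le> (\<Sum>r\<in>R. 2 * n * ln (1 + real (card (C r)) / (lam * n)))"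
  proof (rule sum_mono)
    fix r
    show "(\<Sum>t\<in>C r. min 1 (y t \<bullet> (matrix_inv (gram lam y {s\<in>C r. s < t}) *v y t)))
        \<le> 2 * n * ln (1 + real (card (C r)) / (lam * n))"
      unfolding n_def by (rule elliptical_potential) (use assms(1,2,3) in \<open>auto simp: C_def\<close>)
  qed
  also have "\<dots> = 2 * n * (\<Sum>r\<in>R. ln (1 + real (card (C r)) / (lam * n)))"
    by (simp add: sum_distrib_left)
  also have "\<dots> \<le> 2 * n * (card R * ln (1 + (\<Sum>r\<in>R. real (card (C r))) / (lam * n * card R)))"
    using assms(1,4,5) sum_ln_one_plus_le_card_mult_ln[of R "lam * n" "\<lambda>r. real (card (C r))"]
    by (simp add: n_def)
  also have "(\<Sum>r\<in>R. real (card (C r))) = card S"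
    using assms(2,4,6) card_eq_sum[of S] sum.group[of S R f "\<lambda>_. 1::nat"]
    by (simp add: C_def flip: of_nat_sum)
  finally show ?thesis
    by (simp add: n_def mult_ac)
qed

lemma le_diff_if_mod_eq:
  fixes s t d :: nat
  assumes "s mod d = t mod d" and "s < t"
  shows "s \<le> t - d"
proof -
  have "d dvd t - s"
    using assms mod_eq_dvd_iff_nat[of s t d] by simp
  then have "d \<le> t - s"
    using assms(2) by (simp add: dvd_imp_le)
  with assms(2) show ?thesis by arith
qed

theorem lemma3:
  fixes X :: "nat \<Rightarrow> real^'p" and lam :: real and d T :: nat
  assumes "lam > 0" and "d \<ge> 1"
    and "\<And>t. t \<ge> 1 \<Longrightarrow> norm (X t) \<le> 1"
    and "T \<ge> d + 1"
  shows "(\<Sum>t\<in>{d+1..T}. min 1 ((wnorm (matrix_inv (design lam X (t - d))) (X t))\<^sup>2))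
          \<le> 2 * real d * real CARD('p) * ln (1 + real T / (lam * real d * real CARD('p)))"
proof -
  define p where "p = real CARD('p)"
  define u where
    "u t = X t \<bullet> (matrix_inv (gram lam X {s\<in>{d+1..T}. s mod d = t mod d \<and> s < t}) *v X t)" for t
  have "(wnorm (matrix_inv (design lam X (t - d))) (X t))\<^sup>2 \<le> u t" for t
  proof -
    have "{s\<in>{d+1..T}. s mod d = t mod d \<and> s < t} \<subseteq> {1..t - d}"
      by (auto dest: le_diff_if_mod_eq)
    with assms(1) show ?thesis
      by (simp add: u_def design_eq_gram wnorm_matrix_inv_gram gram_inv_quadratic_antimono)
  qed
  then have "(\<Sum>t\<in>{d+1..T}. min 1 ((wnorm (matrix_inv (design lam X (t - d))) (X t))\<^sup>2))
      \<le> (\<Sum>t\<in>{d+1..T}. min 1 (u t))"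
    by (intro sum_mono min.mono) auto
  also have "\<dots> \<le> 2 * d * p * ln (1 + real (T - d) / (lam * d * p))"
  proof -
    have "{..<d} \<noteq> {}" and "(\<lambda>t. t mod d) ` {d+1..T} \<subseteq> {..<d}"
      using assms(2) by (auto simp: lessThan_empty_iff)
    from elliptical_potential_partition[OF assms(1) _ _ _ this, of X]
    show ?thesis
      using assms(3) by (simp add: u_def p_def)
  qed
  also have "\<dots> \<le> 2 * d * p * ln (1 + T / (lam * d * p))"
    using assms(1,2)
    by (intro mult_left_mono ln_mono) (simp_all add: p_def divide_right_mono add_pos_nonneg)
  finally show ?thesis
    by (simp add: p_def)
qed

end
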